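(* Fix a material point and let $T>0$. Let $t\mapsto\bm C(t)$, $t\in[0,T]$, be a smooth curve of symmetric positive-definite tensors, and for $\alpha=1,\dots,m$ let $t\mapsto\bm\Gamma^\alpha(t)$ be the solution on $[0,T]$ of $$\eta^\alpha\frac{d\bm\Gamma^\alpha}{dt}=\tilde{\bm S}^\alpha_{\mathrm{iso}}(\tilde{\bm C}(t))-\hat{\bm S}^\alpha_0-\mu^\alpha(\bm\Gamma^\alpha-\bm I)$$ with a given symmetric initial value, where $\tilde{\bm C}(t)=\det(\bm C(t))^{-1/3}\bm C(t)$. For $t_n\in[0,T)$ and $0<\Delta t_n\le T-t_n$ set $\bm C_n:=\bm C(t_n)$, $\bm C_{n+1}:=\bm C(t_n+\Delta t_n)$, $\bm\Gamma^\alpha_n:=\bm\Gamma^\alpha(t_n)$, $\bm\Gamma^\alpha_{n+1}:=\bm\Gamma^\alpha(t_n+\Delta t_n)$, $\bm\Gamma^\alpha_{n+\frac12}:=\frac12(\bm\Gamma^\alpha_n+\bm\Gamma^\alpha_{n+1})$, $\bm C_{n+\frac12}:=\frac12(\bm C_n+\bm C_{n+1})$, $\tilde{\bm C}_k:=\det(\bm C_k)^{-1/3}\bm C_k$, $\bm Z_n:=(\bm C_{n+1}-\bm C_n)/2$, $\bm S_{\mathrm{iso}\,n+\frac12}:=\bm S_{\mathrm{iso}}(\bm C_{n+\frac12},\bm\Gamma^1_{n+\frac12},\dots,\bm\Gamma^m_{n+\frac12})$, and $$\bm S_{\mathrm{iso\,enh1}}:=\frac{G_{\mathrm{iso}}(\tilde{\bm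 C}_{n+1},\bm\Gamma^1_{n+1},\dots,\bm\Gamma^m_{n+1})-G_{\mathrm{iso}}(\tilde{\bm C}_{n},\bm\Gamma^1_{n+1},\dots,\bm\Gamma^m_{n+1})-\bm S_{\mathrm{iso}\,n+\frac12}:\bm Z_n}{|\bm Z_n|^2}\bm Z_n$$ (and $\bm S_{\mathrm{iso\,enh1}}:=\bm 0$ if $\bm Z_n=\bm 0$). Then $\bm S_{\mathrm{iso\,enh1}}$ is asymptotically first order in $\Delta t_n$: there are constants $K>0$ and $\delta>0$, independent of $t_n$ and $\Delta t_n$, such that $|\bm S_{\mathrm{iso\,enh1}}|\le K\Delta t_n$ whenever $0<\Delta t_n\le\delta$.
   Context: $|\bm A|=(\bm A:\bm A)^{1/2}$; $\bm I$ the identity tensor. Material model: fix $m\ge1$; for each $\alpha$: $\mu^\alpha>0$, $\eta^\alpha>0$, constant symmetric tensor $\hat{\bm S}^\alpha_0$, smooth scalar function $G^\alpha$ on symmetric positive-definite tensors with $\tilde{\bm S}^\alpha_{\mathrm{iso}}(\tilde{\bm C}):=2\partial G^\alpha/\partial\tilde{\bm C}$; $G^\infty_{\mathrm{iso}}$ smooth. $\Upsilon^\alpha(\tilde{\bm C},\bm\Gamma):=\frac{1}{4\mu^\alpha}|\tilde{\bm S}^\alpha_{\mathrm{iso}}(\tilde{\bm C})-\hat{\bm S}^\alpha_0-\mu^\alpha(\bm\Gamma-\bm I)|^2$; $G_{\mathrm{iso}}(\tilde{\bm C},\bm\Gamma^1,\dots,\bm\Gamma^m):=G^\infty_{\mathrm{iso}}(\tilde{\bm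 C})+\sum_\alpha\Upsilon^\alpha(\tilde{\bm C},\bm\Gamma^\alpha)$. For symmetric positive-definite $\bm C$, with $\tilde{\bm C}=\det(\bm C)^{-1/3}\bm C$ and $\tilde{\bm S}:=2\partial G_{\mathrm{iso}}/\partial\tilde{\bm C}$ (at fixed $\bm\Gamma^\alpha$) evaluated at $(\tilde{\bm C},\bm\Gamma^1,\dots,\bm\Gamma^m)$, the isochoric second Piola–Kirchhoff stress is $\bm S_{\mathrm{iso}}(\bm C,\bm\Gamma^1,\dots,\bm\Gamma^m):=\det(\bm C)^{-1/3}\big(\tilde{\bm S}-\tfrac13(\bm C:\tilde{\bm S})\bm C^{-1}\big)$. *)

theory Defs
  imports "HOL-Analysis.Analysis"
begin

text \<open>Tensors are 3x3 real matrices. On real^3^3 the library inner product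
  A \<bullet> B is the double contraction A : B, and norm A is the Frobenius norm |A|.\<close>

coinductive Cinf_on :: "'a::real_normed_vector set \<Rightarrow> ('a \<Rightarrow> 'b::real_normed_vector) \<Rightarrow> bool"
  for U :: "'a set" where
  "\<lbrakk>\<And>x. x \<in> U \<Longrightarrow> f differentiable (at x within U);
    \<And>v. Cinf_on U (\<lambda>x. frechet_derivative f (at x within U) v)\<rbrakk> \<Longrightarrow> Cinf_on U f"

definition sym_tensor :: "real^3^3 \<Rightarrow> bool" where
  "sym_tensor A \<longleftrightarrow> transpose A = A"

definition spd :: "real^3^3 \<Rightarrow> bool" where
  "spd A \<longleftrightarrow> sym_tensor A \<and> (\<forall>x::real^3. x \<noteq> 0 \<longrightarrow> 0 < x \<bullet> (A *v x))"

definition smooth_spd :: "(real^3^3 \<Rightarrow> real) \<Rightarrow> bool" where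
  "smooth_spd g \<longleftrightarrow> (\<exists>U. open U \<and> {A. spd A} \<subseteq> U \<and> Cinf_on U g)"

definition unimod :: "real^3^3 \<Rightarrow> real^3^3" where
  "unimod C = (det C powr (-1/3)) *\<^sub>R C"

definition basis_t :: "3 \<Rightarrow> 3 \<Rightarrow> real^3^3" where
  "basis_t i j = (\<chi> k l. if k = i \<and> l = j then 1 else 0)"

text \<open>Gradient dg/dC: the tensor D with g'(C) H = D : H.\<close>
definition grad :: "(real^3^3 \<Rightarrow> real) \<Rightarrow> real^3^3 \<Rightarrow> real^3^3" where
  "grad g C = (\<chi> i j. frechet_derivative g (at C) (basis_t i j))"

definition Sa :: "(nat \<Rightarrow> real^3^3 \<Rightarrow> real) \<Rightarrow> nat \<Rightarrow> real^3^3 \<Rightarrow> real^3^3" where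
  "Sa G \<alpha> Cb = 2 *\<^sub>R grad (G \<alpha>) Cb"

definition Upsilon :: "(nat \<Rightarrow> real) \<Rightarrow> (nat \<Rightarrow> real^3^3 \<Rightarrow> real) \<Rightarrow> (nat \<Rightarrow> real^3^3)
    \<Rightarrow> nat \<Rightarrow> real^3^3 \<Rightarrow> real^3^3 \<Rightarrow> real" where
  "Upsilon mu G S0 \<alpha> Cb Gam =
     1 / (4 * mu \<alpha>) * (norm (Sa G \<alpha> Cb - S0 \<alpha> - mu \<alpha> *\<^sub>R (Gam - mat 1)))\<^sup>2"

definition Giso :: "nat \<Rightarrow> (nat \<Rightarrow> real) \<Rightarrow> (nat \<Rightarrow> real^3^3 \<Rightarrow> real) \<Rightarrow> (nat \<Rightarrow> real^3^3)
    \<Rightarrow> (real^3^3 \<Rightarrow> real) \<Rightarrow> real^3^3 \<Rightarrow> (nat \<Rightarrow> real^3^3) \<Rightarrow> real" where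
  "Giso m mu G S0 Ginf Cb Gs = Ginf Cb + (\<Sum>\<alpha>=1..m. Upsilon mu G S0 \<alpha> Cb (Gs \<alpha>))"

definition Siso :: "nat \<Rightarrow> (nat \<Rightarrow> real) \<Rightarrow> (nat \<Rightarrow> real^3^3 \<Rightarrow> real) \<Rightarrow> (nat \<Rightarrow> real^3^3)
    \<Rightarrow> (real^3^3 \<Rightarrow> real) \<Rightarrow> real^3^3 \<Rightarrow> (nat \<Rightarrow> real^3^3) \<Rightarrow> real^3^3" where
  "Siso m mu G S0 Ginf C Gs =
     (let St = 2 *\<^sub>R grad (\<lambda>X. Giso m mu G S0 Ginf X Gs) (unimod C)
      in (det C powr (-1/3)) *\<^sub>R (St - ((1/3) * (C \<bullet> St)) *\<^sub>R matrix_inv C))"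

definition Senh1 :: "nat \<Rightarrow> (nat \<Rightarrow> real) \<Rightarrow> (nat \<Rightarrow> real^3^3 \<Rightarrow> real) \<Rightarrow> (nat \<Rightarrow> real^3^3)
    \<Rightarrow> (real^3^3 \<Rightarrow> real) \<Rightarrow> (real \<Rightarrow> real^3^3) \<Rightarrow> (nat \<Rightarrow> real \<Rightarrow> real^3^3)
    \<Rightarrow> real \<Rightarrow> real \<Rightarrow> real^3^3" where
  "Senh1 m mu G S0 Ginf C Gam tn dt =
     (let Cn = C tn; Cn1 = C (tn + dt);
          Gn1 = (\<lambda>\<alpha>. Gam \<alpha> (tn + dt));
          Gh = (\<lambda>\<alpha>. (1/2) *\<^sub>R (Gam \<alpha> tn + Gam \<alpha> (tn + dt)));
          Ch = (1/2) *\<^sub>R (Cn + Cn1);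
          Z = (1/2) *\<^sub>R (Cn1 - Cn)
      in if Z = 0 then 0
         else ((Giso m mu G S0 Ginf (unimod Cn1) Gn1 - Giso m mu G S0 Ginf (unimod Cn) Gn1
                 - Siso m mu G S0 Ginf Ch Gh \<bullet> Z) / (norm Z)\<^sup>2) *\<^sub>R Z)"

end

theory Submission
  imports Defs
begin

text \<open>Write \<open>g\<close> for \<open>G_iso(-, \<Gamma>_{n+1})\<close>. The isochoric stress \<open>S_iso(C, \<Gamma>_{n+1})\<close> is
  twice the gradient of \<open>C \<mapsto> g(unimod C)\<close>, so the mean value theorem on the segment from
  \<open>C_n\<close> to \<open>C_{n+1}\<close> yields a point \<open>\<xi>\<close> on it with
  \<open>g(unimod C_{n+1}) - g(unimod C_n) = S_iso(\<xi>, \<Gamma>_{n+1}) : Z_n\<close>. Hence, by Cauchy-Schwarz,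
  \<open>|S_enh1| \<le> |S_iso(\<xi>, \<Gamma>_{n+1}) - S_iso(C_{n+1/2}, \<Gamma>_{n+1/2})|\<close>.
  On the compact convex hull of the SPD curve \<open>C\<close> all ingredients of \<open>S_iso\<close> are smooth,
  and \<open>\<Gamma>\<close>, solving an ODE with continuous right-hand side, is Lipschitz in time; so
  \<open>(C, s, t) \<mapsto> S_iso(C, (\<Gamma>(s) + \<Gamma>(t))/2)\<close> is Lipschitz. Since \<open>C\<close> is Lipschitz too, its
  two arguments above are \<open>O(\<Delta>t)\<close> apart.\<close>

section \<open>Lipschitz continuity\<close>

definition lipschitz :: "'a::metric_space set \<Rightarrow> ('a \<Rightarrow> 'b::metric_space) \<Rightarrow> bool" where
  "lipschitz S f \<longleftrightarrow> (\<exists>L. L-lipschitz_on S f)"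

lemma lipschitzI: "L-lipschitz_on S f \<Longrightarrow> lipschitz S f"
  unfolding lipschitz_def by blast

lemma lipschitzE:
  assumes "lipschitz S f"
  obtains L where "L-lipschitz_on S f"
  using assms unfolding lipschitz_def by blast

lemma lipschitz_cong: "lipschitz S f \<Longrightarrow> (\<And>x. x \<in> S \<Longrightarrow> f x = g x) \<Longrightarrow> lipschitz S g"
  unfolding lipschitz_def by (metis lipschitz_on_transform)

lemma lipschitz_subset: "lipschitz S f \<Longrightarrow> T \<subseteq> S \<Longrightarrow> lipschitz T f"
  unfolding lipschitz_def by (meson lipschitz_on_subset)

lemma lipschitz_compose:
  assumes "lipschitz T f" "lipschitz S g" "g ` S \<subseteq> T"
  shows "lipschitz S (\<lambda>x. f (g x))"
proof -
  obtain L M where "L-lipschitz_on T f" "M-lipschitz_on S g"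
    using assms(1,2) by (auto elim!: lipschitzE)
  then have "(L * M)-lipschitz_on S (\<lambda>x. f (g x))"
    using assms(3) by (intro lipschitz_on_compose2) (auto intro: lipschitz_on_subset)
  then show ?thesis by (rule lipschitzI)
qed

lemma lipschitz_const: "lipschitz S (\<lambda>x. c)"
  by (rule lipschitzI[OF lipschitz_on_constant])

lemma lipschitz_ident: "lipschitz S (\<lambda>x. x)"
  by (rule lipschitzI[OF lipschitz_on_id])

lemma lipschitz_add:
  fixes f g :: "'a::metric_space \<Rightarrow> 'b::real_normed_vector"
  shows "lipschitz S f \<Longrightarrow> lipschitz S g \<Longrightarrow> lipschitz S (\<lambda>x. f x + g x)"
  by (auto elim!: lipschitzE intro: lipschitzI lipschitz_on_add)

lemma lipschitz_diff:
  fixes f g :: "'a::metric_space \<Rightarrow> 'b::real_normed_vector"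
  shows "lipschitz S f \<Longrightarrow> lipschitz S g \<Longrightarrow> lipschitz S (\<lambda>x. f x - g x)"
  by (auto elim!: lipschitzE intro: lipschitzI lipschitz_on_diff)

lemma lipschitz_scaleR_right:
  fixes f :: "'a::metric_space \<Rightarrow> 'b::real_normed_vector"
  shows "lipschitz S f \<Longrightarrow> lipschitz S (\<lambda>x. c *\<^sub>R f x)"
  by (auto elim!: lipschitzE intro: lipschitzI lipschitz_on_cmult)

lemma lipschitz_sum:
  fixes f :: "'i \<Rightarrow> 'a::metric_space \<Rightarrow> 'b::real_normed_vector"
  assumes "finite A" "\<And>a. a \<in> A \<Longrightarrow> lipschitz S (f a)"
  shows "lipschitz S (\<lambda>x. \<Sum>a\<in>A. f a x)"
  using assms by (induction A rule: finite_induct) (simp_all add: lipschitz_const lipschitz_add)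

lemma lipschitz_bounded_linear:
  fixes f :: "'a::real_normed_vector \<Rightarrow> 'b::real_normed_vector"
  shows "bounded_linear f \<Longrightarrow> lipschitz S f"
  by (metis bounded_linear.lipschitz_boundE lipschitzI)

lemma lipschitz_continuous_on: "lipschitz S f \<Longrightarrow> continuous_on S f"
  by (auto elim!: lipschitzE intro: lipschitz_on_continuous_on)

lemma bounded_lipschitz_image:
  assumes "lipschitz S f" "bounded S"
  shows "bounded (f ` S)"
proof (cases "S = {}")
  case False
  then obtain x0 where x0: "x0 \<in> S" by blast
  obtain L where L: "L-lipschitz_on S f" using assms(1) by (rule lipschitzE)
  obtain e where e: "\<forall>y\<in>S. dist x0 y \<le> e" using assms(2) bounded_any_center by blast
  have "dist (f x0) (f y) \<le> L * e" if "y \<in> S" for y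
    using lipschitz_onD[OF L x0 that] e that lipschitz_on_nonneg[OF L]
    by (meson mult_left_mono order_trans)
  then show ?thesis unfolding bounded_any_center[where a = "f x0"] by blast
qed simp

lemma lipschitz_bounded_bilinear:
  fixes f :: "'a::metric_space \<Rightarrow> 'b::real_normed_vector" and g :: "'a \<Rightarrow> 'c::real_normed_vector"
  assumes bil: "bounded_bilinear mul" and S: "bounded S"
    and f: "lipschitz S f" and g: "lipschitz S g"
  shows "lipschitz S (\<lambda>x. mul (f x) (g x) :: 'd::real_normed_vector)"
proof -
  obtain Bf where Bf: "Bf > 0" "\<forall>x\<in>S. norm (f x) \<le> Bf"
    using bounded_lipschitz_image[OF f S] by (auto simp: bounded_pos)
  obtain Bg where Bg: "Bg > 0" "\<forall>x\<in>S. norm (g x) \<le> Bg"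
    using bounded_lipschitz_image[OF g S] by (auto simp: bounded_pos)
  obtain Lf Lg where Lf: "Lf-lipschitz_on S f" and Lg: "Lg-lipschitz_on S g"
    using f g by (auto elim!: lipschitzE)
  obtain K where K: "\<And>a b. norm (mul a b) \<le> norm a * norm b * K" "K \<ge> 0"
    using bounded_bilinear.nonneg_bounded[OF bil] by blast
  have Lf0: "Lf \<ge> 0" and Lg0: "Lg \<ge> 0" using Lf Lg lipschitz_on_nonneg by auto
  have "(K * (Lf * Bg + Bf * Lg))-lipschitz_on S (\<lambda>x. mul (f x) (g x))"
  proof (rule lipschitz_onI)
    fix x y assume xy: "x \<in> S" "y \<in> S"
    have diff_split: "mul (f x) (g x) - mul (f y) (g y) = mul (f x - f y) (g x) + mul (f y) (g x - g y)"
      by (simp add: bounded_bilinear.diff_left[OF bil] bounded_bilinear.diff_right[OF bil])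
    have df: "norm (f x - f y) \<le> Lf * dist x y" and dg: "norm (g x - g y) \<le> Lg * dist x y"
      using lipschitz_onD[OF Lf xy] lipschitz_onD[OF Lg xy] by (auto simp: dist_norm)
    have "norm (mul (f x - f y) (g x)) \<le> (Lf * dist x y) * Bg * K"
      using K(1)[of "f x - f y" "g x"] df Bg xy K(2)
      by (meson mult_mono mult_right_mono norm_ge_zero order_trans zero_le_dist Lf0 mult_nonneg_nonneg)
    moreover have "norm (mul (f y) (g x - g y)) \<le> Bf * (Lg * dist x y) * K"
      using K(1)[of "f y" "g x - g y"] dg Bf xy K(2)
      by (meson mult_mono mult_right_mono norm_ge_zero order_trans)
    ultimately show "dist (mul (f x) (g x)) (mul (f y) (g y)) \<le> K * (Lf * Bg + Bf * Lg) * dist x y"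
      unfolding dist_norm diff_split
      by (smt (verit) norm_triangle_ineq distrib_left mult.commute mult.left_commute)
  next
    show "0 \<le> K * (Lf * Bg + Bf * Lg)" using K(2) Lf0 Lg0 Bf(1) Bg(1) by simp
  qed
  then show ?thesis by (rule lipschitzI)
qed

lemma lipschitz_mult:
  fixes f g :: "'a::metric_space \<Rightarrow> real"
  shows "bounded S \<Longrightarrow> lipschitz S f \<Longrightarrow> lipschitz S g \<Longrightarrow> lipschitz S (\<lambda>x. f x * g x)"
  by (rule lipschitz_bounded_bilinear[OF bounded_bilinear_mult])

lemma lipschitz_inner:
  fixes f g :: "'a::metric_space \<Rightarrow> 'b::real_inner"
  shows "bounded S \<Longrightarrow> lipschitz S f \<Longrightarrow> lipschitz S g \<Longrightarrow> lipschitz S (\<lambda>x. f x \<bullet> g x)"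
  by (rule lipschitz_bounded_bilinear[OF bounded_bilinear_inner])

lemma lipschitz_scaleR:
  fixes f :: "'a::metric_space \<Rightarrow> real" and g :: "'a \<Rightarrow> 'b::real_normed_vector"
  shows "bounded S \<Longrightarrow> lipschitz S f \<Longrightarrow> lipschitz S g \<Longrightarrow> lipschitz S (\<lambda>x. f x *\<^sub>R g x)"
  by (rule lipschitz_bounded_bilinear[OF bounded_bilinear_scaleR])

lemma lipschitz_vec_nth:
  fixes f :: "'a::metric_space \<Rightarrow> 'b::real_normed_vector^'n"
  shows "lipschitz S f \<Longrightarrow> lipschitz S (\<lambda>x. f x $ i)"
  by (rule lipschitz_compose[OF lipschitz_bounded_linear[OF bounded_linear_vec_nth]]) auto

lemma lipschitz_vec_lambda:
  fixes f :: "'a::metric_space \<Rightarrow> 'b::real_normed_vector^'n"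
  assumes "\<And>i. lipschitz S (\<lambda>x. f x $ i)"
  shows "lipschitz S f"
proof -
  obtain L where L: "\<And>i. (L i)-lipschitz_on S (\<lambda>x. f x $ i)"
    using assms unfolding lipschitz_def by metis
  have "(\<Sum>i\<in>UNIV. L i)-lipschitz_on S f"
  proof (rule lipschitz_onI)
    fix x y assume xy: "x \<in> S" "y \<in> S"
    have "dist (f x) (f y) \<le> (\<Sum>i\<in>UNIV. norm ((f x - f y) $ i))"
      unfolding dist_norm norm_vec_def by (rule L2_set_le_sum) auto
    also have "\<dots> \<le> (\<Sum>i\<in>UNIV. L i * dist x y)"
      by (intro sum_mono) (metis lipschitz_onD[OF L xy] dist_norm vector_minus_component)
    finally show "dist (f x) (f y) \<le> (\<Sum>i\<in>UNIV. L i) * dist x y"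
      by (simp add: sum_distrib_right)
  qed (use L lipschitz_on_nonneg in \<open>meson sum_nonneg\<close>)
  then show ?thesis by (rule lipschitzI)
qed

lemma lipschitz_tensor:
  fixes f :: "'a::metric_space \<Rightarrow> real^'n^'m"
  shows "(\<And>i j. lipschitz S (\<lambda>x. f x $ i $ j)) \<Longrightarrow> lipschitz S f"
  by (intro lipschitz_vec_lambda)

lemma continuous_derivative_imp_lipschitz:
  fixes f :: "'a::euclidean_space \<Rightarrow> 'b::real_normed_vector"
  assumes K: "convex K" "compact K"
    and f': "\<And>x. x \<in> K \<Longrightarrow> (f has_derivative f' x) (at x within K)"
    and cont: "\<And>b. b \<in> Basis \<Longrightarrow> continuous_on K (\<lambda>x. f' x b)"
  shows "lipschitz K f"
proof -
  have "\<exists>B>0. \<forall>x\<in>K. norm (f' x b) \<le> B" if "b \<in> Basis" for b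
    using compact_imp_bounded[OF compact_continuous_image[OF cont[OF that] K(2)]]
    by (auto simp: bounded_pos)
  then obtain B where B: "\<And>b. b \<in> Basis \<Longrightarrow> B b > 0 \<and> (\<forall>x\<in>K. norm (f' x b) \<le> B b)"
    by metis
  have "onorm (f' x) \<le> (\<Sum>b\<in>Basis. B b)" if x: "x \<in> K" for x
  proof (rule onorm_le)
    fix h :: 'a
    have lin: "linear (f' x)" using f'[OF x] has_derivative_linear by blast
    have "f' x h = f' x (\<Sum>b\<in>Basis. (h \<bullet> b) *\<^sub>R b)"
      by (simp only: euclidean_representation)
    also have "\<dots> = (\<Sum>b\<in>Basis. (h \<bullet> b) *\<^sub>R f' x b)"
      by (simp only: linear_sum[OF lin] linear_scale[OF lin])
    finally have "norm (f' x h) \<le> (\<Sum>b\<in>Basis. \<bar>h \<bullet> b\<bar> * norm (f' x b))"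
      using norm_sum[of "\<lambda>b. (h \<bullet> b) *\<^sub>R f' x b" Basis] by simp
    also have "\<dots> \<le> (\<Sum>b\<in>Basis. norm h * B b)"
      using B x Basis_le_norm by (intro sum_mono mult_mono) auto
    finally show "norm (f' x h) \<le> (\<Sum>b\<in>Basis. B b) * norm h"
      by (simp add: sum_distrib_left mult.commute)
  qed
  moreover have "0 \<le> (\<Sum>b\<in>Basis. B b)"
    using B by (meson less_imp_le sum_nonneg)
  ultimately show ?thesis
    by (intro lipschitzI bounded_derivative_imp_lipschitz[OF f' K(1)])
qed

lemma continuous_vector_derivative_imp_lipschitz:
  fixes f :: "real \<Rightarrow> 'b::real_normed_vector"
  assumes "\<And>t. t \<in> {a..b} \<Longrightarrow> (f has_vector_derivative f' t) (at t within {a..b})"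
    and "continuous_on {a..b} f'"
  shows "lipschitz {a..b} f"
  using assms unfolding has_vector_derivative_def
  by (intro continuous_derivative_imp_lipschitz[where f' = "\<lambda>t h. h *\<^sub>R f' t"])
    (auto intro: continuous_intros)

lemma lipschitz_powr:
  assumes "0 < c"
  shows "lipschitz {c..B} (\<lambda>x::real. x powr r)"
proof (rule continuous_derivative_imp_lipschitz[where f' = "\<lambda>x. (*) (r * x powr (r - 1))"])
  show "((\<lambda>x. x powr r) has_derivative (*) (r * x powr (r - 1))) (at x within {c..B})"
    if "x \<in> {c..B}" for x
    using has_real_derivative_powr[of x r] assms that
    by (auto simp: has_field_derivative_def intro: has_derivative_at_withinI)
next
  show "continuous_on {c..B} (\<lambda>x. r * x powr (r - 1) * b)" for b
    using assms by (intro continuous_intros) auto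
qed auto

section \<open>Smooth functions\<close>

lemma frechet_derivative_cong_within:
  assumes "x \<in> U" "\<And>y. y \<in> U \<Longrightarrow> f y = g y"
  shows "frechet_derivative f (at x within U) = frechet_derivative g (at x within U)"
proof -
  have "(f has_derivative D) (at x within U) \<longleftrightarrow> (g has_derivative D) (at x within U)" for D
    using assms by (metis has_derivative_transform)
  then show ?thesis unfolding frechet_derivative_def by simp
qed

lemma Cinf_on_cong:
  assumes "Cinf_on U f" "\<And>x. x \<in> U \<Longrightarrow> f x = g x"
  shows "Cinf_on U g"
proof -
  have "\<exists>f. Cinf_on U f \<and> (\<forall>x\<in>U. f x = g x)" using assms by blast
  then show ?thesis
  proof (coinduction arbitrary: g rule: Cinf_on.coinduct)
    case (Cinf_on g)
    then obtain f where f: "Cinf_on U f" "\<forall>x\<in>U. f x = g x" by blast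
    from f(1) have d: "\<And>x. x \<in> U \<Longrightarrow> f differentiable (at x within U)"
      and c: "\<And>v. Cinf_on U (\<lambda>x. frechet_derivative f (at x within U) v)"
      by (blast elim: Cinf_on.cases)+
    have "g differentiable (at x within U)" if x: "x \<in> U" for x
      using d[OF x] f(2) x unfolding differentiable_def by (metis has_derivative_transform)
    moreover have "\<exists>f. Cinf_on U f \<and> (\<forall>x\<in>U. f x = frechet_derivative g (at x within U) v)" for v
      using c[of v] frechet_derivative_cong_within[of _ U f g] f(2) by auto
    ultimately show ?case by blast
  qed
qed

lemma Cinf_on_has_derivative:
  "Cinf_on U f \<Longrightarrow> x \<in> U \<Longrightarrow> (f has_derivative frechet_derivative f (at x within U)) (at x within U)"
  by (erule Cinf_on.cases) (simp add: frechet_derivative_works[symmetric])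

lemma Cinf_on_frechet_derivative:
  "Cinf_on U f \<Longrightarrow> Cinf_on U (\<lambda>x. frechet_derivative f (at x within U) v)"
  by (erule Cinf_on.cases) simp

lemma Cinf_on_continuous_on: "Cinf_on U f \<Longrightarrow> continuous_on U f"
  by (metis Cinf_on_has_derivative continuous_on_eq_continuous_within has_derivative_continuous)

lemma Cinf_on_open_frechet_derivative:
  assumes "open U" "Cinf_on U f"
  shows "Cinf_on U (\<lambda>x. frechet_derivative f (at x) v)"
proof (rule Cinf_on_cong[OF Cinf_on_frechet_derivative[OF assms(2)]])
  fix x assume "x \<in> U"
  then have "at x within U = at x" by (rule at_within_open[OF _ assms(1)])
  then show "frechet_derivative f (at x within U) v = frechet_derivative f (at x) v" by (simp only:)
qed

lemma Cinf_on_imp_lipschitz: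
  fixes f :: "'a::euclidean_space \<Rightarrow> 'b::real_normed_vector"
  assumes "Cinf_on K f" "convex K" "compact K"
  shows "lipschitz K f"
  by (rule continuous_derivative_imp_lipschitz[OF assms(2,3) Cinf_on_has_derivative[OF assms(1)]])
    (auto intro: Cinf_on_continuous_on[OF Cinf_on_frechet_derivative[OF assms(1)]])

section \<open>Tensors and the SPD cone\<close>

definition cof :: "real^3^3 \<Rightarrow> real^3^3" where
  "cof A = vector [
     vector [A$2$2 * A$3$3 - A$2$3 * A$3$2, A$2$3 * A$3$1 - A$2$1 * A$3$3, A$2$1 * A$3$2 - A$2$2 * A$3$1],
     vector [A$1$3 * A$3$2 - A$1$2 * A$3$3, A$1$1 * A$3$3 - A$1$3 * A$3$1, A$1$2 * A$3$1 - A$1$1 * A$3$2],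
     vector [A$1$2 * A$2$3 - A$1$3 * A$2$2, A$1$3 * A$2$1 - A$1$1 * A$2$3, A$1$1 * A$2$2 - A$1$2 * A$2$1]]"

lemma matrix_mul_transpose_cof: "A ** transpose (cof A) = det A *\<^sub>R mat 1"
  by (simp add: vec_eq_iff forall_3 matrix_matrix_mult_def sum_3 det_3 mat_def transpose_def cof_def
      algebra_simps)

lemma transpose_cof_matrix_mul: "transpose (cof A) ** A = det A *\<^sub>R mat 1"
  by (simp add: vec_eq_iff forall_3 matrix_matrix_mult_def sum_3 det_3 mat_def transpose_def cof_def
      algebra_simps)

lemma matrix_inv_unique:
  fixes A B :: "real^'n^'n"
  assumes "A ** B = mat 1" "B ** A = mat 1"
  shows "matrix_inv A = B"
proof -
  have "A ** matrix_inv A = mat 1" "matrix_inv A ** A = mat 1"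
    using someI_ex[of "\<lambda>A'. A ** A' = mat 1 \<and> A' ** A = mat 1"] assms
    unfolding matrix_inv_def by blast+
  then have "matrix_inv A ** (A ** B) = B"
    by (simp add: matrix_mul_assoc)
  then show ?thesis by (simp add: assms(1))
qed

lemma matrix_inv_cof:
  assumes "det A \<noteq> 0"
  shows "matrix_inv A = (1 / det A) *\<^sub>R transpose (cof A)"
  using assms
  by (intro matrix_inv_unique)
    (simp_all add: matrix_scalar_ac scalar_matrix_assoc[symmetric] matrix_mul_transpose_cof
      transpose_cof_matrix_mul)

lemma transpose_cof_sym:
  assumes "sym_tensor A"
  shows "transpose (cof A) = cof A"
proof -
  have "A$i$j = A$j$i" for i j
  proof -
    have "transpose A $ j $ i = A $ i $ j" by (simp add: transpose_def)
    then show ?thesis using assms unfolding sym_tensor_def by simp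
  qed
  then show ?thesis
    by (simp add: vec_eq_iff forall_3 transpose_def cof_def algebra_simps)
qed

lemma det_eq_3:
  "det = (\<lambda>A::real^3^3. A$1$1 * A$2$2 * A$3$3 + A$1$2 * A$2$3 * A$3$1 + A$1$3 * A$2$1 * A$3$2
    - A$1$1 * A$2$3 * A$3$2 - A$1$2 * A$2$1 * A$3$3 - A$1$3 * A$2$2 * A$3$1)"
  by (rule ext) (rule det_3)

lemma has_derivative_entry: "((\<lambda>A::real^3^3. A $ i $ j) has_derivative (\<lambda>H. H $ i $ j)) F"
  by (rule bounded_linear_imp_has_derivative
      [OF bounded_linear_compose[OF bounded_linear_vec_nth bounded_linear_vec_nth]])

lemma has_derivative_det: "(det has_derivative (\<lambda>H. cof A \<bullet> H)) (at A)"
proof -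
  have "(det has_derivative (\<lambda>H.
      H$1$1 * A$2$2 * A$3$3 + A$1$1 * H$2$2 * A$3$3 + A$1$1 * A$2$2 * H$3$3
    + (H$1$2 * A$2$3 * A$3$1 + A$1$2 * H$2$3 * A$3$1 + A$1$2 * A$2$3 * H$3$1)
    + (H$1$3 * A$2$1 * A$3$2 + A$1$3 * H$2$1 * A$3$2 + A$1$3 * A$2$1 * H$3$2)
    - (H$1$1 * A$2$3 * A$3$2 + A$1$1 * H$2$3 * A$3$2 + A$1$1 * A$2$3 * H$3$2)
    - (H$1$2 * A$2$1 * A$3$3 + A$1$2 * H$2$1 * A$3$3 + A$1$2 * A$2$1 * H$3$3)
    - (H$1$3 * A$2$2 * A$3$1 + A$1$3 * H$2$2 * A$3$1 + A$1$3 * A$2$2 * H$3$1))) (at A)"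
    unfolding det_eq_3
    by (rule has_derivative_eq_rhs, (rule has_derivative_entry derivative_eq_intros refl)+)
      (simp add: algebra_simps)
  then show ?thesis
    by (rule has_derivative_eq_rhs) (simp add: fun_eq_iff inner_vec_def sum_3 cof_def algebra_simps)
qed

lemma continuous_on_det: "continuous_on S (det :: real^3^3 \<Rightarrow> real)"
  using has_derivative_continuous[OF has_derivative_det] continuous_at_imp_continuous_on by blast

lemma lipschitz_det:
  assumes "bounded S"
  shows "lipschitz S (det :: real^3^3 \<Rightarrow> real)"
  unfolding det_eq_3
  by (intro lipschitz_diff lipschitz_add lipschitz_mult assms; intro lipschitz_vec_nth lipschitz_ident)

lemma lipschitz_cof:
  assumes "bounded S"
  shows "lipschitz S cof"
proof -
  have "\<forall>i j. lipschitz S (\<lambda>A. cof A $ i $ j)"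
    unfolding forall_3 cof_def
    by (simp only: vector_3; intro conjI lipschitz_diff lipschitz_mult lipschitz_vec_nth lipschitz_ident assms)
  then show ?thesis by (intro lipschitz_vec_lambda) blast
qed

lemma spd_convex_combination:
  assumes "spd A" "spd B" "0 \<le> u" "0 \<le> v" "u + v = 1"
  shows "spd (u *\<^sub>R A + v *\<^sub>R B)"
  unfolding spd_def sym_tensor_def
proof (intro conjI allI impI)
  show "transpose (u *\<^sub>R A + v *\<^sub>R B) = u *\<^sub>R A + v *\<^sub>R B"
    using assms(1,2) unfolding spd_def sym_tensor_def
    by (simp add: vec_eq_iff transpose_def)
  fix x :: "real^3" assume "x \<noteq> 0"
  then have "0 < x \<bullet> (A *v x)" "0 < x \<bullet> (B *v x)" using assms(1,2) unfolding spd_def by auto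
  moreover have "x \<bullet> ((u *\<^sub>R A + v *\<^sub>R B) *v x) = u * (x \<bullet> (A *v x)) + v * (x \<bullet> (B *v x))"
    by (simp add: matrix_vector_mult_add_rdistrib scaleR_matrix_vector_assoc[symmetric] inner_add_right)
  moreover have "0 < u * (x \<bullet> (A *v x)) + v * (x \<bullet> (B *v x))"
    if "0 < x \<bullet> (A *v x)" "0 < x \<bullet> (B *v x)"
    using that assms(3-5) by (cases "u = 0") (auto intro: add_pos_nonneg)
  ultimately show "0 < x \<bullet> ((u *\<^sub>R A + v *\<^sub>R B) *v x)" by simp
qed

lemma convex_spd: "convex {A. spd A}"
  unfolding convex_def using spd_convex_combination by blast

lemma convex_hull_spd: "K \<subseteq> {A. spd A} \<Longrightarrow> convex hull K \<subseteq> {A. spd A}"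
  using hull_minimal[of K "{A. spd A}" convex] convex_spd by blast

lemma spd_scaleR: "spd A \<Longrightarrow> 0 < c \<Longrightarrow> spd (c *\<^sub>R A)"
  unfolding spd_def sym_tensor_def
  by (simp add: transpose_scalar scaleR_matrix_vector_assoc[symmetric])

lemma spd_mat_1: "spd (mat 1)"
  unfolding spd_def sym_tensor_def by (simp add: inner_gt_zero_iff)

lemma spd_det_nonzero:
  assumes "spd A"
  shows "det A \<noteq> 0"
proof
  assume "det A = 0"
  then obtain x y where "x \<noteq> y" "A *v x = A *v y"
    using det_nz_iff_inj[of "(*v) A"] unfolding inj_def by auto
  then have "x - y \<noteq> 0" "A *v (x - y) = 0"
    by (auto simp: matrix_vector_mult_diff_distrib)
  then show False using assms unfolding spd_def by fastforce
qed

lemma spd_det_pos: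
  assumes "spd A"
  shows "det A > 0"
proof (rule ccontr)
  assume "\<not> det A > 0"
  let ?f = "\<lambda>s::real. det ((1 - s) *\<^sub>R mat 1 + s *\<^sub>R A)"
  have "continuous_on {0..1} ?f"
    by (intro continuous_on_compose2[OF continuous_on_det[of UNIV]] continuous_intros) auto
  then obtain s where s: "0 \<le> s" "s \<le> 1" "?f s = 0"
    using IVT2'[of ?f 1 0 0] \<open>\<not> det A > 0\<close> by auto
  have "spd ((1 - s) *\<^sub>R mat 1 + s *\<^sub>R A)"
    using s by (intro spd_convex_combination spd_mat_1 assms) auto
  then show False using spd_det_nonzero s(3) by blast
qed

lemma spd_unimod:
  assumes "spd C"
  shows "spd (unimod C)"
proof -
  have "det C powr (-1/3) > 0" using spd_det_pos[OF assms] by simp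
  then show ?thesis unfolding unimod_def by (rule spd_scaleR[OF assms])
qed

lemma matrix_inv_spd: "spd A \<Longrightarrow> matrix_inv A = (1 / det A) *\<^sub>R cof A"
  using matrix_inv_cof spd_det_nonzero transpose_cof_sym unfolding spd_def by metis

lemma compact_spd_det_bounds:
  assumes "compact K" "K \<subseteq> {A. spd A}"
  shows "\<exists>c B. 0 < c \<and> det ` K \<subseteq> {c..B}"
proof (cases "K = {}")
  case False
  obtain a where a: "a \<in> K" "\<forall>y\<in>K. det a \<le> det y"
    using continuous_attains_inf[OF assms(1) False continuous_on_det] by blast
  obtain b :: "real^3^3" where "\<forall>y\<in>K. det y \<le> det b"
    using continuous_attains_sup[OF assms(1) False continuous_on_det] by blast
  moreover have "det a > 0" using a(1) assms(2) spd_det_pos by blast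
  ultimately show ?thesis using a by (intro exI[of _ "det a"] exI[of _ "det b"]) auto
qed (intro exI[of _ 1] conjI; simp)

lemma lipschitz_det_powr:
  assumes "compact K" "K \<subseteq> {A. spd A}"
  shows "lipschitz K (\<lambda>A. det A powr r)"
proof -
  obtain c B where "0 < c" "det ` K \<subseteq> {c..B}"
    using compact_spd_det_bounds[OF assms] by blast
  then show ?thesis
    by (intro lipschitz_compose[OF lipschitz_powr lipschitz_det[OF compact_imp_bounded[OF assms(1)]]])
qed

lemma lipschitz_matrix_inv:
  assumes "compact K" "K \<subseteq> {A. spd A}"
  shows "lipschitz K matrix_inv"
proof -
  have bounded: "bounded K" by (rule compact_imp_bounded[OF assms(1)])
  have "lipschitz K (\<lambda>A. det A powr -1 *\<^sub>R cof A)"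
    by (rule lipschitz_scaleR[OF bounded lipschitz_det_powr[OF assms] lipschitz_cof[OF bounded]])
  then show ?thesis
  proof (rule lipschitz_cong)
    fix A assume "A \<in> K"
    then have "spd A" using assms(2) by blast
    then show "det A powr -1 *\<^sub>R cof A = matrix_inv A"
      using spd_det_pos[of A] by (simp add: matrix_inv_spd abs_of_pos)
  qed
qed

lemma lipschitz_unimod:
  assumes "compact K" "K \<subseteq> {A. spd A}"
  shows "lipschitz K unimod"
  unfolding unimod_def[abs_def]
  by (rule lipschitz_scaleR[OF compact_imp_bounded[OF assms(1)] lipschitz_det_powr[OF assms] lipschitz_ident])

lemma smooth_spd_has_derivative:
  assumes "smooth_spd f" "spd X"
  shows "(f has_derivative frechet_derivative f (at X)) (at X)"
proof -
  obtain U where "open U" "{A. spd A} \<subseteq> U" "Cinf_on U f"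
    using assms(1) unfolding smooth_spd_def by blast
  then show ?thesis
    using Cinf_on_has_derivative[of U f X] at_within_open[of X U] assms(2) by auto
qed

lemma smooth_spd_frechet_derivative:
  "smooth_spd f \<Longrightarrow> smooth_spd (\<lambda>X. frechet_derivative f (at X) v)"
  unfolding smooth_spd_def using Cinf_on_open_frechet_derivative by blast

lemma smooth_spd_continuous_on: "smooth_spd f \<Longrightarrow> K \<subseteq> {A. spd A} \<Longrightarrow> continuous_on K f"
  unfolding smooth_spd_def by (meson Cinf_on_continuous_on continuous_on_subset order_trans)

lemma lipschitz_smooth_spd:
  assumes f: "smooth_spd f" and K: "compact K" "K \<subseteq> {A. spd A}"
  shows "lipschitz K f"
proof -
  let ?H = "convex hull K"
  have H: "?H \<subseteq> {A. spd A}" by (rule convex_hull_spd[OF K(2)])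
  have "lipschitz ?H f"
  proof (rule continuous_derivative_imp_lipschitz[where f' = "\<lambda>X. frechet_derivative f (at X)"])
    show "compact ?H" by (rule compact_convex_hull[OF K(1)])
    show "(f has_derivative frechet_derivative f (at X)) (at X within ?H)" if "X \<in> ?H" for X
      using smooth_spd_has_derivative[OF f] H that by (blast intro: has_derivative_at_withinI)
    show "continuous_on ?H (\<lambda>X. frechet_derivative f (at X) b)" for b
      by (rule smooth_spd_continuous_on[OF smooth_spd_frechet_derivative[OF f] H])
  qed simp
  then show ?thesis by (rule lipschitz_subset) (rule hull_subset)
qed

section \<open>Gradients and the free energy\<close>

lemma tensor_basis_expansion: "H = (\<Sum>i\<in>UNIV. \<Sum>j\<in>UNIV. H$i$j *\<^sub>R basis_t i j)"
  by (simp add: vec_eq_iff forall_3 sum_3 basis_t_def)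

lemma inner_basis_t: "A \<bullet> basis_t i j = A $ i $ j"
  using exhaust_3[of i] exhaust_3[of j] by (auto simp: inner_vec_def sum_3 basis_t_def)

lemma linear_eq_inner_tensor:
  assumes "linear L"
  shows "L H = (\<chi> i j. L (basis_t i j)) \<bullet> (H::real^3^3)"
proof -
  have "L H = L (\<Sum>i\<in>UNIV. \<Sum>j\<in>UNIV. H$i$j *\<^sub>R basis_t i j)"
    by (subst tensor_basis_expansion) (rule refl)
  also have "\<dots> = (\<Sum>i\<in>UNIV. \<Sum>j\<in>UNIV. H$i$j * L (basis_t i j))"
    by (simp add: linear_sum[OF assms] linear_scale[OF assms])
  also have "\<dots> = (\<chi> i j. L (basis_t i j)) \<bullet> H"
    by (simp add: inner_vec_def mult.commute)
  finally show ?thesis .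
qed

lemma grad_eqI:
  assumes "(f has_derivative L) (at X)"
  shows "grad f X = (\<chi> i j. L (basis_t i j))"
proof -
  have "frechet_derivative f (at X) = L" by (rule frechet_derivative_at[OF assms, symmetric])
  then show ?thesis unfolding grad_def by simp
qed

lemma has_derivative_grad_inner:
  assumes "(f has_derivative L) (at X)"
  shows "(f has_derivative (\<lambda>H. grad f X \<bullet> H)) (at X)"
proof -
  have "L H = grad f X \<bullet> H" for H
    unfolding grad_eqI[OF assms] by (rule linear_eq_inner_tensor[OF has_derivative_linear[OF assms]])
  then have "L = (\<lambda>H. grad f X \<bullet> H)" by (rule ext)
  with assms show ?thesis by simp
qed

lemma has_derivative_tensor:
  fixes f :: "'a::real_normed_vector \<Rightarrow> real^3^3"
  assumes "\<And>i j. ((\<lambda>x. f x $ i $ j) has_derivative (\<lambda>h. f' h $ i $ j)) F"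
  shows "(f has_derivative f') F"
proof -
  have "((\<lambda>x. \<Sum>i\<in>UNIV. \<Sum>j\<in>UNIV. f x $ i $ j *\<^sub>R basis_t i j) has_derivative
      (\<lambda>h. \<Sum>i\<in>UNIV. \<Sum>j\<in>UNIV. f' h $ i $ j *\<^sub>R basis_t i j)) F"
    by (intro has_derivative_sum has_derivative_scaleR_left assms)
  moreover have "(\<lambda>x. \<Sum>i\<in>UNIV. \<Sum>j\<in>UNIV. f x $ i $ j *\<^sub>R basis_t i j) = f"
    "(\<lambda>h. \<Sum>i\<in>UNIV. \<Sum>j\<in>UNIV. f' h $ i $ j *\<^sub>R basis_t i j) = f'"
    by (rule ext, rule tensor_basis_expansion[symmetric])+
  ultimately show ?thesis by (simp only:)
qed

definition hess :: "(real^3^3 \<Rightarrow> real) \<Rightarrow> real^3^3 \<Rightarrow> real^3^3 \<Rightarrow> real^3^3" where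
  "hess f X H = (\<chi> i j. frechet_derivative (\<lambda>Y. grad f Y $ i $ j) (at X) H)"

lemma smooth_spd_grad_entry: "smooth_spd f \<Longrightarrow> smooth_spd (\<lambda>X. grad f X $ i $ j)"
  unfolding grad_def by (simp add: smooth_spd_frechet_derivative)

lemma smooth_spd_has_derivative_grad:
  "smooth_spd f \<Longrightarrow> spd X \<Longrightarrow> (f has_derivative (\<lambda>H. grad f X \<bullet> H)) (at X)"
  by (rule has_derivative_grad_inner[OF smooth_spd_has_derivative])

lemma has_derivative_grad: "smooth_spd f \<Longrightarrow> spd X \<Longrightarrow> (grad f has_derivative hess f X) (at X)"
  unfolding hess_def
  by (intro has_derivative_tensor) (simp add: smooth_spd_has_derivative smooth_spd_grad_entry)

lemma lipschitz_grad:
  "smooth_spd f \<Longrightarrow> compact K \<Longrightarrow> K \<subseteq> {A. spd A} \<Longrightarrow> lipschitz K (grad f)"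
  by (intro lipschitz_tensor lipschitz_smooth_spd smooth_spd_grad_entry)

lemma lipschitz_hess:
  assumes "smooth_spd f" "compact K" "K \<subseteq> {A. spd A}"
  shows "lipschitz K (\<lambda>X. hess f X H)"
  unfolding hess_def
  by (intro lipschitz_tensor)
    (simp add: lipschitz_smooth_spd smooth_spd_frechet_derivative smooth_spd_grad_entry assms)

text \<open>\<open>\<eta>\<^sup>\<alpha>\<close> times the rate of \<open>\<Gamma>\<^sup>\<alpha>\<close> in the evolution law; \<open>Upsilon\<close> is its squared
  norm over \<open>4\<mu>\<^sup>\<alpha>\<close>.\<close>
definition overstress :: "(nat \<Rightarrow> real) \<Rightarrow> (nat \<Rightarrow> real^3^3 \<Rightarrow> real) \<Rightarrow> (nat \<Rightarrow> real^3^3) \<Rightarrow> nat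
    \<Rightarrow> real^3^3 \<Rightarrow> real^3^3 \<Rightarrow> real^3^3" where
  "overstress mu G S0 \<alpha> X Gm = Sa G \<alpha> X - S0 \<alpha> - mu \<alpha> *\<^sub>R (Gm - mat 1)"

lemma has_derivative_Upsilon:
  assumes "smooth_spd (G \<alpha>)" "spd X"
  shows "((\<lambda>Y. Upsilon mu G S0 \<alpha> Y Gm) has_derivative
     (\<lambda>H. (overstress mu G S0 \<alpha> X Gm \<bullet> hess (G \<alpha>) X H) / mu \<alpha>)) (at X)"
proof -
  have W: "((\<lambda>Y. overstress mu G S0 \<alpha> Y Gm) has_derivative (\<lambda>H. 2 *\<^sub>R hess (G \<alpha>) X H)) (at X)"
    unfolding overstress_def Sa_def
    by (rule has_derivative_eq_rhs[OF has_derivative_diff[OF has_derivative_diff[OF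
          has_derivative_scaleR_right[OF has_derivative_grad[OF assms]] has_derivative_const]
          has_derivative_const]]) simp
  show ?thesis
    unfolding Upsilon_def overstress_def[symmetric] power2_norm_eq_inner
    by (rule has_derivative_eq_rhs[OF has_derivative_mult_right[OF has_derivative_inner[OF W W]]])
      (simp add: fun_eq_iff inner_commute[of "hess _ _ _"])
qed

lemma has_derivative_Giso:
  assumes "\<forall>\<alpha>\<in>{1..m}. smooth_spd (G \<alpha>)" "smooth_spd Ginf" "spd X"
  shows "((\<lambda>Y. Giso m mu G S0 Ginf Y Gs) has_derivative
    (\<lambda>H. grad Ginf X \<bullet> H + (\<Sum>\<alpha>=1..m. (overstress mu G S0 \<alpha> X (Gs \<alpha>) \<bullet> hess (G \<alpha>) X H) / mu \<alpha>)))
    (at X)"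
proof -
  have "((\<lambda>Y. Upsilon mu G S0 \<alpha> Y (Gs \<alpha>)) has_derivative
      (\<lambda>H. (overstress mu G S0 \<alpha> X (Gs \<alpha>) \<bullet> hess (G \<alpha>) X H) / mu \<alpha>)) (at X)"
    if "\<alpha> \<in> {1..m}" for \<alpha>
    using assms(1) that by (intro has_derivative_Upsilon assms(3)) blast
  then show ?thesis
    unfolding Giso_def by (intro has_derivative_add has_derivative_sum smooth_spd_has_derivative_grad assms(2,3))
qed

lemma grad_Giso:
  assumes "\<forall>\<alpha>\<in>{1..m}. smooth_spd (G \<alpha>)" "smooth_spd Ginf" "spd X"
  shows "grad (\<lambda>Y. Giso m mu G S0 Ginf Y Gs) X = grad Ginf X +
    (\<Sum>\<alpha>=1..m. (1 / mu \<alpha>) *\<^sub>R (\<chi> k l. overstress mu G S0 \<alpha> X (Gs \<alpha>) \<bullet> hess (G \<alpha>) X (basis_t k l)))"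
  unfolding grad_eqI[OF has_derivative_Giso[OF assms]]
  by (simp add: vec_eq_iff inner_basis_t sum_component)

lemma lipschitz_grad_Giso:
  assumes smooth: "\<forall>\<alpha>\<in>{1..m}. smooth_spd (G \<alpha>)" "smooth_spd Ginf"
    and D: "bounded D"
    and K: "compact K" "K \<subseteq> {A. spd A}" "X ` D \<subseteq> K" "lipschitz D X"
    and Gs: "\<And>\<alpha>. \<alpha> \<in> {1..m} \<Longrightarrow> lipschitz D (\<lambda>p. Gs p \<alpha>)"
  shows "lipschitz D (\<lambda>p. grad (\<lambda>Y. Giso m mu G S0 Ginf Y (Gs p)) (X p))"
proof -
  have on_K: "lipschitz D (\<lambda>p. f (X p))" if "lipschitz K f" for f :: "real^3^3 \<Rightarrow> real^3^3"
    by (rule lipschitz_compose[OF that K(4,3)])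
  have overstress: "lipschitz D (\<lambda>p. overstress mu G S0 \<alpha> (X p) (Gs p \<alpha>))" if "\<alpha> \<in> {1..m}" for \<alpha>
    unfolding overstress_def Sa_def using smooth(1) that
    by (intro lipschitz_diff lipschitz_scaleR_right lipschitz_const on_K lipschitz_grad Gs K(1,2)) auto
  have "lipschitz D (\<lambda>p. (1 / mu \<alpha>) *\<^sub>R
      (\<chi> k l. overstress mu G S0 \<alpha> (X p) (Gs p \<alpha>) \<bullet> hess (G \<alpha>) (X p) (basis_t k l)))"
    if "\<alpha> \<in> {1..m}" for \<alpha>
  proof (intro lipschitz_scaleR_right lipschitz_tensor)
    fix k l
    have "lipschitz D (\<lambda>p. overstress mu G S0 \<alpha> (X p) (Gs p \<alpha>) \<bullet> hess (G \<alpha>) (X p) (basis_t k l))"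
      using smooth(1) that by (intro lipschitz_inner[OF D] overstress[OF that] on_K lipschitz_hess K(1,2)) blast
    then show "lipschitz D (\<lambda>p. (\<chi> k l. overstress mu G S0 \<alpha> (X p) (Gs p \<alpha>) \<bullet>
        hess (G \<alpha>) (X p) (basis_t k l)) $ k $ l)" by simp
  qed
  then have "lipschitz D (\<lambda>p. grad Ginf (X p) + (\<Sum>\<alpha>=1..m. (1 / mu \<alpha>) *\<^sub>R
      (\<chi> k l. overstress mu G S0 \<alpha> (X p) (Gs p \<alpha>) \<bullet> hess (G \<alpha>) (X p) (basis_t k l))))"
    by (intro lipschitz_add lipschitz_sum on_K lipschitz_grad smooth(2) K(1,2)) auto
  then show ?thesis
  proof (rule lipschitz_cong)
    fix p assume "p \<in> D"
    then have "spd (X p)" using K(2,3) by blast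
    then show "grad Ginf (X p) + (\<Sum>\<alpha>=1..m. (1 / mu \<alpha>) *\<^sub>R
        (\<chi> k l. overstress mu G S0 \<alpha> (X p) (Gs p \<alpha>) \<bullet> hess (G \<alpha>) (X p) (basis_t k l))) =
      grad (\<lambda>Y. Giso m mu G S0 Ginf Y (Gs p)) (X p)"
      by (rule grad_Giso[OF smooth, symmetric])
  qed
qed

section \<open>The isochoric stress\<close>

definition iso_stress :: "(real^3^3 \<Rightarrow> real) \<Rightarrow> real^3^3 \<Rightarrow> real^3^3" where
  "iso_stress g C = (let St = 2 *\<^sub>R grad g (unimod C)
      in (det C powr (-1/3)) *\<^sub>R (St - ((1/3) * (C \<bullet> St)) *\<^sub>R matrix_inv C))"

lemma Siso_eq_iso_stress: "Siso m mu G S0 Ginf C Gs = iso_stress (\<lambda>X. Giso m mu G S0 Ginf X Gs) C"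
  unfolding Siso_def iso_stress_def by simp

lemma has_derivative_unimod:
  assumes "spd C"
  shows "(unimod has_derivative (\<lambda>H. det C powr (-1/3) *\<^sub>R H
           - ((1/3) * det C powr (-1/3) * (matrix_inv C \<bullet> H)) *\<^sub>R C)) (at C)"
proof -
  have pos: "det C > 0" by (rule spd_det_pos[OF assms])
  have "((\<lambda>A. det A powr (-1/3)) has_derivative
      (\<lambda>H. ((-1/3) * det C powr (-1/3 - 1)) * (cof C \<bullet> H))) (at C)"
    using has_derivative_compose[OF has_derivative_det
        has_real_derivative_powr[OF pos, of "-1/3", unfolded has_field_derivative_def]]
    by (simp add: o_def)
  then have u: "(unimod has_derivative (\<lambda>H. det C powr (-1/3) *\<^sub>R H
        + (((-1/3) * det C powr (-1/3 - 1)) * (cof C \<bullet> H)) *\<^sub>R C)) (at C)"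
    unfolding unimod_def[abs_def]
    by (rule has_derivative_eq_rhs[OF has_derivative_scaleR[OF _ has_derivative_ident]]) simp
  have powr: "det C * det C powr (-1/3 - 1) = det C powr (-1/3)"
    using powr_add[of "det C" 1 "-1/3 - 1"] pos by simp
  have e: "((-1/3) * det C powr (-1/3 - 1)) * (cof C \<bullet> H)
      = - ((1/3) * det C powr (-1/3) * (matrix_inv C \<bullet> H))" for H
  proof -
    have "cof C \<bullet> H = det C * (matrix_inv C \<bullet> H)"
      using pos by (simp add: matrix_inv_spd[OF assms])
    then have "((-1/3) * det C powr (-1/3 - 1)) * (cof C \<bullet> H)
        = - ((1/3) * (det C * det C powr (-1/3 - 1)) * (matrix_inv C \<bullet> H))"
      by (simp add: mult_ac)
    then show ?thesis unfolding powr .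
  qed
  show ?thesis using u unfolding e by simp
qed

text \<open>This is where the formula defining \<open>Siso\<close> comes from.\<close>
lemma has_derivative_comp_unimod:
  assumes "spd C" "(g has_derivative g') (at (unimod C))"
  shows "((\<lambda>C. g (unimod C)) has_derivative (\<lambda>H. (1/2) * (iso_stress g C \<bullet> H))) (at C)"
proof -
  have g: "(g has_derivative (\<lambda>K. grad g (unimod C) \<bullet> K)) (at (unimod C))"
    by (rule has_derivative_grad_inner[OF assms(2)])
  show ?thesis
    using has_derivative_compose[OF has_derivative_unimod[OF assms(1)] g]
    unfolding iso_stress_def Let_def o_def
    by (rule has_derivative_eq_rhs)
      (simp add: fun_eq_iff inner_diff_right inner_diff_left inner_commute[of C] algebra_simps)
qed

lemma lipschitz_Siso:
  assumes smooth: "\<forall>\<alpha>\<in>{1..m}. smooth_spd (G \<alpha>)" "smooth_spd Ginf"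
    and D: "bounded D"
    and K: "compact K" "K \<subseteq> {A. spd A}" "C ` D \<subseteq> K" "lipschitz D C"
    and Gs: "\<And>\<alpha>. \<alpha> \<in> {1..m} \<Longrightarrow> lipschitz D (\<lambda>p. Gs p \<alpha>)"
  shows "lipschitz D (\<lambda>p. Siso m mu G S0 Ginf (C p) (Gs p))"
proof -
  have on_K: "lipschitz D (\<lambda>p. f (C p))" if "lipschitz K f" for f :: "real^3^3 \<Rightarrow> 'b::metric_space"
    by (rule lipschitz_compose[OF that K(4,3)])
  have unimod_K: "compact (unimod ` K)" "unimod ` K \<subseteq> {A. spd A}"
    using compact_continuous_image[OF lipschitz_continuous_on[OF lipschitz_unimod[OF K(1,2)]] K(1)]
      K(2) spd_unimod by auto
  have "lipschitz D (\<lambda>p. grad (\<lambda>Y. Giso m mu G S0 Ginf Y (Gs p)) (unimod (C p)))"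
    using K(3) by (intro lipschitz_grad_Giso[OF smooth D unimod_K] on_K lipschitz_unimod K(1,2) Gs) auto
  then show ?thesis
    unfolding Siso_def Let_def
    by (intro lipschitz_scaleR[OF D] lipschitz_diff lipschitz_scaleR_right lipschitz_mult[OF D]
        lipschitz_inner[OF D] lipschitz_const on_K lipschitz_det_powr lipschitz_matrix_inv
        lipschitz_ident K(1,2))
qed

section \<open>The enhanced stress\<close>

lemma mean_value_segment:
  fixes f :: "'a::real_inner \<Rightarrow> real"
  assumes "\<And>x. x \<in> closed_segment a b \<Longrightarrow> (f has_derivative (\<lambda>h. D x \<bullet> h)) (at x)"
  obtains \<xi> where "\<xi> \<in> closed_segment a b" "f b - f a = D \<xi> \<bullet> (b - a)"
proof -
  define p where "p s = a + s *\<^sub>R (b - a)" for s :: real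
  have p_segment: "p s \<in> closed_segment a b" if "s \<in> {0..1}" for s
    using that unfolding p_def closed_segment_def by (auto intro!: exI[of _ s] simp: algebra_simps)
  have deriv: "((\<lambda>s. f (p s)) has_derivative (\<lambda>h. D (p s) \<bullet> (h *\<^sub>R (b - a)))) (at s within {0..1})"
    if "0 \<le> s" "s \<le> 1" for s
  proof -
    have "(p has_derivative (\<lambda>h. h *\<^sub>R (b - a))) (at s within {0..1})"
      unfolding p_def[abs_def] by (auto intro!: derivative_eq_intros)
    moreover have "(f has_derivative (\<lambda>h. D (p s) \<bullet> h)) (at (p s))"
      using assms p_segment that by auto
    ultimately show ?thesis by (rule has_derivative_compose)
  qed
  then obtain s where "s \<in> {0..1}" "f (p 1) - f (p 0) = D (p s) \<bullet> ((1 - 0) *\<^sub>R (b - a))"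
    using mvt_very_simple[OF zero_le_one deriv] by blast
  then show thesis using that[of "p s"] p_segment by (simp add: p_def)
qed

lemma lipschitz_viscous_flow:
  assumes G: "smooth_spd (G \<alpha>)"
    and C: "lipschitz {a..b} C" "\<forall>t\<in>{a..b}. spd (C t)"
    and Gam: "\<And>t. t \<in> {a..b} \<Longrightarrow> (Gam has_vector_derivative
      (1 / eta) *\<^sub>R (Sa G \<alpha> (unimod (C t)) - Shat - mu *\<^sub>R (Gam t - mat 1))) (at t within {a..b})"
  shows "lipschitz {a..b} Gam"
proof (rule continuous_vector_derivative_imp_lipschitz[OF Gam])
  let ?K = "C ` {a..b}"
  have K: "compact ?K" "?K \<subseteq> {A. spd A}"
    using compact_continuous_image[OF lipschitz_continuous_on[OF C(1)]] C(2) by auto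
  have "compact (unimod ` ?K)" "unimod ` ?K \<subseteq> {A. spd A}"
    using compact_continuous_image[OF lipschitz_continuous_on[OF lipschitz_unimod[OF K]] K(1)] K(2)
      spd_unimod by auto
  then have "lipschitz {a..b} (\<lambda>t. Sa G \<alpha> (unimod (C t)))"
    unfolding Sa_def
    by (intro lipschitz_scaleR_right lipschitz_compose[OF lipschitz_grad[OF G]]
        lipschitz_compose[OF lipschitz_unimod[OF K] C(1)]) auto
  then have "continuous_on {a..b} (\<lambda>t. Sa G \<alpha> (unimod (C t)))"
    by (rule lipschitz_continuous_on)
  moreover have "continuous_on {a..b} Gam"
    using Gam has_vector_derivative_continuous continuous_on_eq_continuous_within by blast
  ultimately show "continuous_on {a..b}
      (\<lambda>t. (1 / eta) *\<^sub>R (Sa G \<alpha> (unimod (C t)) - Shat - mu *\<^sub>R (Gam t - mat 1)))"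
    by (intro continuous_intros)
qed

lemma lipschitz_Siso_midpoint:
  fixes a b :: real
  assumes smooth: "\<forall>\<alpha>\<in>{1..m}. smooth_spd (G \<alpha>)" "smooth_spd Ginf"
    and K: "compact K" "K \<subseteq> {A. spd A}"
    and Gam: "\<And>\<alpha>. \<alpha> \<in> {1..m} \<Longrightarrow> lipschitz {a..b} (Gam \<alpha>)"
  shows "lipschitz (K \<times> {a..b} \<times> {a..b})
    (\<lambda>p. Siso m mu G S0 Ginf (fst p) (\<lambda>\<alpha>. (1/2) *\<^sub>R (Gam \<alpha> (fst (snd p)) + Gam \<alpha> (snd (snd p)))))"
proof -
  define D where "D = K \<times> {a..b} \<times> {a..b}"
  have "bounded D" unfolding D_def by (intro bounded_Times compact_imp_bounded compact_Icc K(1))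
  have times: "lipschitz D (\<lambda>p. fst (snd p))" "lipschitz D (\<lambda>p. snd (snd p))"
    by (intro lipschitz_bounded_linear bounded_linear_compose[OF bounded_linear_fst bounded_linear_snd]
        bounded_linear_compose[OF bounded_linear_snd bounded_linear_snd])+
  have Gam_mid: "lipschitz D (\<lambda>p. (1/2) *\<^sub>R (Gam \<alpha> (fst (snd p)) + Gam \<alpha> (snd (snd p))))"
    if "\<alpha> \<in> {1..m}" for \<alpha>
    by (intro lipschitz_scaleR_right lipschitz_add lipschitz_compose[OF Gam[OF that] times(1)]
        lipschitz_compose[OF Gam[OF that] times(2)]) (auto simp: D_def)
  have "fst ` D \<subseteq> K" by (auto simp: D_def)
  then show ?thesis
    using lipschitz_Siso[OF smooth \<open>bounded D\<close> K _ lipschitz_bounded_linear[OF bounded_linear_fst] Gam_mid]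
    by (simp add: D_def)
qed

lemma dist_midpoint_closed_segment:
  fixes a :: "'a::euclidean_space"
  assumes "x \<in> closed_segment a b"
  shows "dist x (midpoint a b) \<le> dist a b"
proof -
  have "dist x (midpoint a b) \<le> dist a b / 2"
    using dist_decreases_closed_segment[OF assms, of "midpoint a b"]
    by (auto simp: dist_midpoint dist_commute)
  then show ?thesis using zero_le_dist[of a b] by linarith
qed

lemma dist_Pair_le: "dist (a, b) (c, d) \<le> dist a c + dist b d"
  unfolding dist_Pair_Pair by (rule sqrt_sum_squares_le_sum) simp_all

lemma norm_projection_le:
  fixes A Z :: "'a::real_inner"
  shows "norm (((A \<bullet> Z) / (norm Z)\<^sup>2) *\<^sub>R Z) \<le> norm A"
proof (cases "Z = 0")
  case False
  then have "norm (((A \<bullet> Z) / (norm Z)\<^sup>2) *\<^sub>R Z) = \<bar>A \<bullet> Z\<bar> / norm Z"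
    by (simp add: power2_eq_square)
  also have "\<dots> \<le> norm A"
    using Cauchy_Schwarz_ineq2[of A Z] False by (simp add: divide_le_eq)
  finally show ?thesis .
qed simp

lemma norm_Senh1_le:
  assumes smooth: "\<forall>\<alpha>\<in>{1..m}. smooth_spd (G \<alpha>)" "smooth_spd Ginf"
    and K: "convex K" "K \<subseteq> {A. spd A}" "C ` {0..T} \<subseteq> K"
    and LC: "LC-lipschitz_on {0..T} C"
    and LP: "LP-lipschitz_on (K \<times> {0..T} \<times> {0..T})
      (\<lambda>p. Siso m mu G S0 Ginf (fst p) (\<lambda>\<alpha>. (1/2) *\<^sub>R (Gam \<alpha> (fst (snd p)) + Gam \<alpha> (snd (snd p)))))"
      (is "LP-lipschitz_on _ ?Psi")
    and t: "0 \<le> tn" "0 < dt" "tn + dt \<le> T"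
  shows "norm (Senh1 m mu G S0 Ginf C Gam tn dt) \<le> LP * (LC + 1) * dt"
proof -
  define t1 where "t1 = tn + dt"
  define C0 C1 where "C0 = C tn" and "C1 = C t1"
  define Ch where "Ch = midpoint C0 C1"
  define Z where "Z = (1/2) *\<^sub>R (C1 - C0)"
  define g where "g X = Giso m mu G S0 Ginf X (\<lambda>\<alpha>. Gam \<alpha> t1)" for X
  define S where "S = ?Psi (Ch, tn, t1)"
  have tK: "tn \<in> {0..T}" "t1 \<in> {0..T}" using t by (auto simp: t1_def)
  have segment_K: "closed_segment C0 C1 \<subseteq> K"
    using K(3) tK by (intro closed_segment_subset K(1)) (auto simp: C0_def C1_def)
  have "((\<lambda>X. g (unimod X)) has_derivative (\<lambda>h. ((1/2) *\<^sub>R iso_stress g X) \<bullet> h)) (at X)"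
    if "X \<in> closed_segment C0 C1" for X
  proof -
    have "spd X" using that segment_K K(2) by blast
    then show ?thesis
      unfolding g_def
      using has_derivative_comp_unimod[OF _ has_derivative_Giso[OF smooth spd_unimod]] by simp
  qed
  then obtain \<xi> where \<xi>: "\<xi> \<in> closed_segment C0 C1"
    and mvt: "g (unimod C1) - g (unimod C0) = ((1/2) *\<^sub>R iso_stress g \<xi>) \<bullet> (C1 - C0)"
    by (rule mean_value_segment)
  have "Senh1 m mu G S0 Ginf C Gam tn dt =
      (if Z = 0 then 0 else ((g (unimod C1) - g (unimod C0) - S \<bullet> Z) / (norm Z)\<^sup>2) *\<^sub>R Z)"
    unfolding Senh1_def Let_def Z_def C0_def C1_def t1_def g_def S_def Ch_def midpoint_def by simp
  also have "g (unimod C1) - g (unimod C0) - S \<bullet> Z = (iso_stress g \<xi> - S) \<bullet> Z"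
    using mvt by (simp add: Z_def inner_diff_left)
  finally have "Senh1 m mu G S0 Ginf C Gam tn dt = (((iso_stress g \<xi> - S) \<bullet> Z) / (norm Z)\<^sup>2) *\<^sub>R Z"
    by simp
  then have "norm (Senh1 m mu G S0 Ginf C Gam tn dt) \<le> norm (?Psi (\<xi>, t1, t1) - ?Psi (Ch, tn, t1))"
    using norm_projection_le unfolding S_def g_def Siso_eq_iso_stress
    by (simp add: scaleR_add_right[symmetric])
  also have "\<dots> \<le> LP * dist (\<xi>, t1, t1) (Ch, tn, t1)"
    unfolding dist_norm[symmetric] using \<xi> segment_K midpoint_in_closed_segment[of C0 C1] tK
    by (intro lipschitz_onD[OF LP]) (auto simp: Ch_def)
  also have "\<dots> \<le> LP * ((LC + 1) * dt)"
  proof (rule mult_left_mono[OF _ lipschitz_on_nonneg[OF LP]])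
    have "dist \<xi> Ch \<le> LC * dt"
      using dist_midpoint_closed_segment[OF \<xi>] lipschitz_onD[OF LC tK] t
      by (simp add: Ch_def C0_def C1_def t1_def dist_real_def)
    then show "dist (\<xi>, t1, t1) (Ch, tn, t1) \<le> (LC + 1) * dt"
      using dist_Pair_le[of \<xi> "(t1, t1)" Ch "(tn, t1)"] t
      by (simp add: dist_Pair_Pair dist_real_def t1_def algebra_simps)
  qed
  finally show ?thesis by simp
qed

theorem proposition2:
  fixes T :: real and m :: nat and mu eta :: "nat \<Rightarrow> real"
    and S0 :: "nat \<Rightarrow> real^3^3" and G :: "nat \<Rightarrow> real^3^3 \<Rightarrow> real"
    and Ginf :: "real^3^3 \<Rightarrow> real" and C :: "real \<Rightarrow> real^3^3"
    and Gam :: "nat \<Rightarrow> real \<Rightarrow> real^3^3"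
  assumes "T > 0" and "m \<ge> 1"
    and "\<forall>\<alpha>\<in>{1..m}. mu \<alpha> > 0 \<and> eta \<alpha> > 0 \<and> sym_tensor (S0 \<alpha>) \<and> smooth_spd (G \<alpha>)"
    and "smooth_spd Ginf"
    and "Cinf_on {0..T} C" and "\<forall>t\<in>{0..T}. spd (C t)"
    and "\<forall>\<alpha>\<in>{1..m}. sym_tensor (Gam \<alpha> 0) \<and>
          (\<forall>t\<in>{0..T}. (Gam \<alpha> has_vector_derivative
              ((1 / eta \<alpha>) *\<^sub>R (Sa G \<alpha> (unimod (C t)) - S0 \<alpha> - mu \<alpha> *\<^sub>R (Gam \<alpha> t - mat 1))))
            (at t within {0..T}))"
  shows "\<exists>K>0. \<exists>\<delta>>0. \<forall>tn dt. 0 \<le> tn \<longrightarrow> tn < T \<longrightarrow> 0 < dt \<longrightarrow> dt \<le> T - tn \<longrightarrow> dt \<le> \<delta> \<longrightarrow>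
           norm (Senh1 m mu G S0 Ginf C Gam tn dt) \<le> K * dt"
proof -
  have smooth: "\<forall>\<alpha>\<in>{1..m}. smooth_spd (G \<alpha>)" using assms(3) by blast
  have lipschitz_C: "lipschitz {0..T} C" by (rule Cinf_on_imp_lipschitz[OF assms(5)]) auto
  then obtain LC where LC: "LC-lipschitz_on {0..T} C" by (rule lipschitzE)
  define K where "K = convex hull (C ` {0..T})"
  have K: "compact K" "convex K" "K \<subseteq> {A. spd A}" "C ` {0..T} \<subseteq> K"
    unfolding K_def using assms(6) lipschitz_continuous_on[OF lipschitz_C]
    by (auto intro!: compact_convex_hull compact_continuous_image convex_hull_spd hull_subset)
  have Gam: "lipschitz {0..T} (Gam \<alpha>)" if "\<alpha> \<in> {1..m}" for \<alpha>
    by (rule lipschitz_viscous_flow[OF _ lipschitz_C assms(6),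
          where G = G and \<alpha> = \<alpha> and eta = "eta \<alpha>" and Shat = "S0 \<alpha>" and mu = "mu \<alpha>"])
      (use smooth assms(7) that in blast)+
  obtain LP where LP: "LP-lipschitz_on (K \<times> {0..T} \<times> {0..T})
      (\<lambda>p. Siso m mu G S0 Ginf (fst p) (\<lambda>\<alpha>. (1/2) *\<^sub>R (Gam \<alpha> (fst (snd p)) + Gam \<alpha> (snd (snd p)))))"
    using lipschitz_Siso_midpoint[OF smooth assms(4) K(1,3) Gam] by (rule lipschitzE)
  define K' where "K' = LP * (LC + 1) + 1"
  have "0 \<le> LP * (LC + 1)" using lipschitz_on_nonneg[OF LP] lipschitz_on_nonneg[OF LC] by simp
  then have "0 < K'" unfolding K'_def by simp
  moreover have "norm (Senh1 m mu G S0 Ginf C Gam tn dt) \<le> K' * dt"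
    if "0 \<le> tn" "0 < dt" "dt \<le> T - tn" for tn dt
  proof -
    have "norm (Senh1 m mu G S0 Ginf C Gam tn dt) \<le> LP * (LC + 1) * dt"
      using that by (intro norm_Senh1_le[OF smooth assms(4) K(2-4) LC LP]) auto
    also have "\<dots> \<le> K' * dt" using that(2) by (simp add: K'_def distrib_right)
    finally show ?thesis .
  qed
  ultimately show ?thesis by (intro exI[of _ K'] exI[of _ 1]) auto
qed

end
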